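(* Let $s=(x,y,u,v)\in\mathbb{R}^4$ with $x,y,u,v\ge0$, $x+y=2$ and $u+v=2$, and write $W^k(s)=(x^{(k)},y^{(k)},u^{(k)},v^{(k)})$. If $y^{(k)}v^{(k)}=0$ for every $k\ge0$, then $y^{(k)}=v^{(k)}=0$ for every $k\ge0$.
   Context: $W:\mathbb{R}^4\to\mathbb{R}^4$ is the map $W(x,y,u,v)=(x',y',u',v')$ with $x'=\tfrac12 xu+\tfrac14 yu$, $y'=\tfrac12 xv+\tfrac14 yu+\tfrac13 yv$, $u'=\tfrac12 xu+\tfrac12 xv+\tfrac14 yu+\tfrac13 yv$, $v'=\tfrac14 yu+\tfrac13 yv$. $W^k$ denotes the $k$-fold iterate ($W^0$ the identity). *)

theory Defs
  imports Complex_Main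
begin

definition W :: "real \<times> real \<times> real \<times> real \<Rightarrow> real \<times> real \<times> real \<times> real" where
  "W s = (case s of (x, y, u, v) \<Rightarrow>
     (x*u/2 + y*u/4,
      x*v/2 + y*u/4 + y*v/3,
      x*u/2 + x*v/2 + y*u/4 + y*v/3,
      y*u/4 + y*v/3))"

end

theory Submission
  imports Defs
begin

text \<open>The hypothesis at k = 0 gives y = 0 or v = 0. If v = 0 then u = 2, and one step of W
  produces y' = v' = y/2. If y = 0 then x = 2, and W maps the point to (u, v, 2, 0), which is of
  the previous kind, so the second iterate has y'' = v'' = v/2. Either way the hypothesis at
  k = 1 or k = 2 kills the remaining coordinate, so the point is the fixed point (2, 0, 2, 0).\<close>

lemma funpow_fixed_point: "f x = x \<Longrightarrow> (f ^^ n) x = x"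
  by (induction n) simp_all

lemma W_v_zero: "u = 2 \<Longrightarrow> W (x, y, u, 0) = (x + y/2, y/2, x + y/2, y/2)"
  by (simp add: W_def)

lemma W_y_zero: "x = 2 \<Longrightarrow> W (x, 0, u, v) = (u, v, u + v, 0)"
  by (simp add: W_def)

lemma W_fixed_point: "W (2, 0, 2, 0) = (2, 0, 2, 0)"
  by (simp add: W_def)

theorem lemma3p4:
  fixes x y u v :: real
  assumes "x \<ge> 0" "y \<ge> 0" "u \<ge> 0" "v \<ge> 0"
    and "x + y = 2" "u + v = 2"
    and "\<forall>k::nat. (case (W ^^ k) (x, y, u, v) of (x', y', u', v') \<Rightarrow> y' * v' = 0)"
  shows "\<forall>k::nat. (case (W ^^ k) (x, y, u, v) of (x', y', u', v') \<Rightarrow> y' = 0 \<and> v' = 0)"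
proof -
  note product_zero = spec[OF assms(7)]
  have "y = 0 \<and> v = 0"
  proof (cases "y = 0")
    case True
    then have "W (x, y, u, v) = (u, v, 2, 0)"
      using assms(5,6) by (simp add: W_y_zero)
    then have "(W ^^ 2) (x, y, u, v) = (u + v/2, v/2, u + v/2, v/2)"
      by (simp add: numeral_2_eq_2 W_v_zero)
    then show ?thesis
      using True product_zero[of 2] by simp
  next
    case False
    then have "v = 0"
      using product_zero[of 0] by simp
    then have "(W ^^ 1) (x, y, u, v) = (x + y/2, y/2, x + y/2, y/2)"
      using assms(6) by (simp add: W_v_zero)
    then show ?thesis
      using False product_zero[of 1] by simp
  qed
  then have "(x, y, u, v) = (2, 0, 2, 0)"
    using assms(5,6) by simp
  then show ?thesis
    using funpow_fixed_point[of W, OF W_fixed_point] by simp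
qed

end
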